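(* Let $p$ be a peak of a coherent tangent bundle $(\mathcal E,\langle\,,\rangle,D,\psi)$ on $M^2$, let $(U;u,v)$ be a $g$-coordinate system at $p$, and let $\gamma\colon[0,1)\to U$ be a $C^1$-regular curve with $\gamma(0)=p$ such that either (1) $\dot\gamma(0)$ is not a null vector (i.e. $\psi_p(\dot\gamma(0))\neq 0$), or (2) $\gamma$ is a singular curve (i.e. $\gamma([0,1))\subset\Sigma$). Then the limit $$\Psi_\gamma:=\lim_{t\to+0}\frac{\psi(\dot\gamma(t))}{|\psi(\dot\gamma(t))|}\in\mathcal E_p$$ exists.
   Context: A coherent tangent bundle over an oriented $2$-manifold $M^2$ is a tuple $(\mathcal E,\langle\,,\rangle,D,\psi)$ where $\mathcal E$ is an orientable rank-$2$ vector bundle over $M^2$ with a fiber metric $\langle\,,\rangle$ and a metric connection $D$, and $\psi\colon TM^2\to\mathcal E$ is a bundle homomorphism satisfying $D_X\psi(Y)-D_Y\psi(X)=\psi([X,Y])$. Fix a co-orientation $\mu$ (a section of $\mathcal E^*\wedge\mathcal E^*$ with $\mu(e_1,e_2)=\pm1$ on orthonormal frames). A point $p$ is singular if $\psi_p$ is not bijective; $\Sigma$ is the singular set; on a positively oriented chart $(u,v)$, $\lambda=\mu(\psi(\partial_u),\psi(\partial_v))$ and $\Sigma=\{\lambda=0\}$. A singular point is non-degenerate if $d\lambda\ne0$ there; then $\Sigma$ is locally a regular curve and the kernel of $\psi_p$ (the null direction) is one-dimensional. A non-degenerate singular point is an $A_2$-point if the null direction is transversal to the singular curve. A singular point $p$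 that is not an $A_2$-point is a peak if there is a coordinate neighborhood $U$ of $p$ such that (i) all singular points in $U\setminus\{p\}$ are $A_2$-points, (ii) $\operatorname{rank}\psi_p=1$, and (iii) $\Sigma\cap U$ consists of finitely many (possibly zero) $C^1$-regular curves starting from $p$. $g$-coordinate system: fix a Riemannian metric $g$ on $M^2$ and the $(1,1)$-tensor $I$ with $ds^2(X,Y)=g(IX,Y)$, where $ds^2=\psi^*\langle\,,\rangle$. Near a peak $p$, $I$ has two distinct eigenvalues $0\le\lambda_1<\lambda_2$; a $g$-coordinate system at $p$ is a chart $(U;u,v)$ around $p$ such that the $u$-curves are $\lambda_1$-eigendirections and the $v$-curves are $\lambda_2$-eigendirections of $I$ (so $\partial_u$ is the null direction at singular points and $\psi(\partial_v)\ne0$ at $p$). *)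

theory Defs
  imports "HOL-Analysis.Analysis"
begin

text \<open>Local model: a coordinate chart (U; u, v) of M^2 is an open set U of real x real,
a point q = (u, v).  The bundle E restricted to U is trivialised by a positively oriented
orthonormal frame (e1, e2), so a section of E is a map U -> real x real, the fiber metric is
the standard inner product and the co-orientation mu is the determinant.\<close>

type_synonym pt = "real \<times> real"

definition pd_u :: "(pt \<Rightarrow> 'b::real_normed_vector) \<Rightarrow> pt \<Rightarrow> 'b" where
  "pd_u f q = frechet_derivative f (at q) (1, 0)"

definition pd_v :: "(pt \<Rightarrow> 'b::real_normed_vector) \<Rightarrow> pt \<Rightarrow> 'b" where
  "pd_v f q = frechet_derivative f (at q) (0, 1)"

fun iter_pd :: "bool list \<Rightarrow> (pt \<Rightarrow> 'b::real_normed_vector) \<Rightarrow> pt \<Rightarrow> 'b" where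
  "iter_pd [] f = f"
| "iter_pd (b # bs) f = (if b then pd_u else pd_v) (iter_pd bs f)"

definition smooth_on :: "pt set \<Rightarrow> (pt \<Rightarrow> 'b::real_normed_vector) \<Rightarrow> bool" where
  "smooth_on U f \<longleftrightarrow> (\<forall>bs. iter_pd bs f differentiable_on U \<and> continuous_on U (iter_pd bs f))"

text \<open>Rotation by +90 degrees in the fiber (the complex structure of the oriented metric
rank-2 bundle); determinant = co-orientation mu in the oriented orthonormal frame.\<close>
definition rotJ :: "pt \<Rightarrow> pt" where
  "rotJ x = (- snd x, fst x)"

definition det2 :: "pt \<Rightarrow> pt \<Rightarrow> real" where
  "det2 a b = fst a * snd b - snd a * fst b"

text \<open>Coherent tangent bundle data on the chart U: psi_u = psi(d/du), psi_v = psi(d/dv),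
and the metric connection D = d + omega J with connection 1-form omega = w_u du + w_v dv.
The compatibility D_{d/du} psi(d/dv) - D_{d/dv} psi(d/du) = psi([d/du,d/dv]) = 0.\<close>
definition coherent_tb :: "pt set \<Rightarrow> (pt \<Rightarrow> pt) \<Rightarrow> (pt \<Rightarrow> pt) \<Rightarrow> (pt \<Rightarrow> real) \<Rightarrow> (pt \<Rightarrow> real) \<Rightarrow> bool" where
  "coherent_tb U psu psv wu wv \<longleftrightarrow>
     open U \<and> smooth_on U psu \<and> smooth_on U psv \<and> smooth_on U wu \<and> smooth_on U wv \<and>
     (\<forall>q\<in>U. pd_u psv q + wu q *\<^sub>R rotJ (psv q) - pd_v psu q - wv q *\<^sub>R rotJ (psu q) = 0)"

text \<open>psi_q applied to a tangent vector X = a d/du + b d/dv.\<close>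
definition psi_at :: "(pt \<Rightarrow> pt) \<Rightarrow> (pt \<Rightarrow> pt) \<Rightarrow> pt \<Rightarrow> pt \<Rightarrow> pt" where
  "psi_at psu psv q X = fst X *\<^sub>R psu q + snd X *\<^sub>R psv q"

definition lam :: "(pt \<Rightarrow> pt) \<Rightarrow> (pt \<Rightarrow> pt) \<Rightarrow> pt \<Rightarrow> real" where
  "lam psu psv q = det2 (psu q) (psv q)"

definition singular_set :: "pt set \<Rightarrow> (pt \<Rightarrow> pt) \<Rightarrow> (pt \<Rightarrow> pt) \<Rightarrow> pt set" where
  "singular_set U psu psv = {q\<in>U. lam psu psv q = 0}"

definition dlam :: "(pt \<Rightarrow> pt) \<Rightarrow> (pt \<Rightarrow> pt) \<Rightarrow> pt \<Rightarrow> pt \<Rightarrow> real" where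
  "dlam psu psv q X = fst X * pd_u (lam psu psv) q + snd X * pd_v (lam psu psv) q"

definition nondegenerate :: "pt set \<Rightarrow> (pt \<Rightarrow> pt) \<Rightarrow> (pt \<Rightarrow> pt) \<Rightarrow> pt \<Rightarrow> bool" where
  "nondegenerate U psu psv q \<longleftrightarrow> q \<in> singular_set U psu psv \<and>
     (pd_u (lam psu psv) q, pd_v (lam psu psv) q) \<noteq> (0, 0)"

text \<open>A_2-point: non-degenerate and the null direction is transversal to the singular curve
(whose tangent line at a non-degenerate point is ker d lambda).\<close>
definition A2_point :: "pt set \<Rightarrow> (pt \<Rightarrow> pt) \<Rightarrow> (pt \<Rightarrow> pt) \<Rightarrow> pt \<Rightarrow> bool" where
  "A2_point U psu psv q \<longleftrightarrow> nondegenerate U psu psv q \<and>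
     (\<forall>X. X \<noteq> 0 \<and> psi_at psu psv q X = 0 \<longrightarrow> dlam psu psv q X \<noteq> 0)"

definition C1_regular_curve :: "(real \<Rightarrow> pt) \<Rightarrow> (real \<Rightarrow> pt) \<Rightarrow> bool" where
  "C1_regular_curve c c' \<longleftrightarrow>
     (\<forall>t\<in>{0..<1}. (c has_vector_derivative c' t) (at t within {0..<1}) \<and> c' t \<noteq> 0) \<and>
     continuous_on {0..<1} c'"

definition peak :: "pt set \<Rightarrow> (pt \<Rightarrow> pt) \<Rightarrow> (pt \<Rightarrow> pt) \<Rightarrow> pt \<Rightarrow> bool" where
  "peak U psu psv p \<longleftrightarrow>
     p \<in> singular_set U psu psv \<and> \<not> A2_point U psu psv p \<and>
     (\<exists>V. open V \<and> p \<in> V \<and> V \<subseteq> U \<and>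
        (\<forall>q \<in> singular_set U psu psv \<inter> V - {p}. A2_point U psu psv q) \<and>
        (psu p, psv p) \<noteq> (0, 0) \<and>
        (\<exists>C :: ((real \<Rightarrow> pt) \<times> (real \<Rightarrow> pt)) set. finite C \<and>
           (\<forall>(c, c')\<in>C. C1_regular_curve c c' \<and> c 0 = p \<and> c ` {0..<1} \<subseteq> V) \<and>
           singular_set U psu psv \<inter> V = {p} \<union> (\<Union>(c, c')\<in>C. c ` {0..<1})))"

text \<open>(U; u, v) is a g-coordinate system: for some Riemannian metric
g = G11 du^2 + 2 G12 du dv + G22 dv^2 on U, with I defined by ds^2(X,Y) = g(IX,Y),
d/du is an eigenvector of I for the eigenvalue lambda_1 and d/dv for lambda_2,
where 0 <= lambda_1 < lambda_2.  (I e = l e  iff  H e = l G e, H the matrix of ds^2.)\<close>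
definition g_coordinates :: "pt set \<Rightarrow> (pt \<Rightarrow> pt) \<Rightarrow> (pt \<Rightarrow> pt) \<Rightarrow> bool" where
  "g_coordinates U psu psv \<longleftrightarrow>
     (\<exists>G11 G12 G22 :: pt \<Rightarrow> real. smooth_on U G11 \<and> smooth_on U G12 \<and> smooth_on U G22 \<and>
       (\<forall>q\<in>U. G11 q > 0 \<and> G11 q * G22 q - (G12 q)\<^sup>2 > 0 \<and>
          (\<exists>l1 l2. 0 \<le> l1 \<and> l1 < l2 \<and>
             psu q \<bullet> psu q = l1 * G11 q \<and> psv q \<bullet> psu q = l1 * G12 q \<and>
             psu q \<bullet> psv q = l2 * G12 q \<and> psv q \<bullet> psv q = l2 * G22 q)))"

end

theory Submission
  imports Defs
begin

(* Case (1), psi_p(gamma'(0)) \<noteq> 0: psi(gamma'(t)) is continuous in t with nonzero limit,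
   so its normalisation converges to the normalisation of that limit.

   Case (2), gamma a singular curve: in g-coordinates psi(d/du) \<bottom> psi(d/dv) and
   psi(d/dv) \<noteq> 0, so on the singular set psi(d/du) = 0 and psi(gamma') = b psi(d/dv) with
   b = snd gamma'.  Near the peak the points gamma t (t > 0) are A_2-points, where the
   velocity of a singular curve cannot be null; hence b t \<noteq> 0.  Being continuous, b has
   constant sign s on (0, delta), and psi(gamma')/|psi(gamma')| = s psi_v/|psi_v| converges. *)

lemma at_within_unit_Ico: "at (0::real) within {0..<1} = at_right 0"
proof -
  have "at (0::real) within {0..<1} = at 0 within {0..1}"
    by (rule at_within_nhd[of _ "{..<1}"]) auto
  thus ?thesis using at_within_Icc_at_right[of "0::real" 1] by simp
qed

lemma C1_regular_curve_tendsto: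
  assumes "C1_regular_curve c c'"
  shows "(c \<longlongrightarrow> c 0) (at_right 0)" and "(c' \<longlongrightarrow> c' 0) (at_right 0)"
proof -
  have "(c has_vector_derivative c' 0) (at 0 within {0..<1})" and "continuous_on {0..<1} c'"
    using assms unfolding C1_regular_curve_def by auto
  then have "continuous (at 0 within {0..<1}) c" "continuous (at 0 within {0..<1}) c'"
    by (auto intro: has_vector_derivative_continuous simp: continuous_on_eq_continuous_within)
  then show "(c \<longlongrightarrow> c 0) (at_right 0)" "(c' \<longlongrightarrow> c' 0) (at_right 0)"
    unfolding continuous_within at_within_unit_Ico by auto
qed

(* A regular curve leaves its initial point: c t \<noteq> c 0 for all small t > 0,
   since (c t - c 0) / t tends to the nonzero vector c' 0. *)
lemma C1_regular_curve_leaves_start: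
  assumes "C1_regular_curve c c'"
  shows "\<forall>\<^sub>F t in at_right 0. c t \<noteq> c 0"
proof -
  have "(c has_derivative (\<lambda>h. h *\<^sub>R c' 0)) (at 0 within {0..<1})" and v: "c' 0 \<noteq> 0"
    using assms unfolding C1_regular_curve_def has_vector_derivative_def by auto
  then have "((\<lambda>t. norm (c t - c 0 - t *\<^sub>R c' 0) / norm t) \<longlongrightarrow> 0) (at_right 0)"
    unfolding has_derivative_iff_norm at_within_unit_Ico by simp
  moreover have "0 < norm (c' 0)" using v by simp
  ultimately have "\<forall>\<^sub>F t in at_right 0. norm (c t - c 0 - t *\<^sub>R c' 0) / norm t < norm (c' 0)"
    by (rule order_tendstoD(2))
  moreover have "\<forall>\<^sub>F t in at_right 0. 0 < (t::real)"
    by (simp add: eventually_at_right_less)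
  ultimately show ?thesis
    by eventually_elim auto
qed

lemma C1_regular_curve_interior_derivative:
  assumes "C1_regular_curve c c'" "t \<in> {0<..<1}"
  shows "(c has_vector_derivative c' t) (at t)" and "c' t \<noteq> 0"
proof -
  have "(c has_vector_derivative c' t) (at t within {0..<1})" and "c' t \<noteq> 0"
    using assms unfolding C1_regular_curve_def by auto
  moreover have "at t within {0..<1} = at t"
    using assms(2) by (intro at_within_interior) (auto simp: interior_atLeastLessThan)
  ultimately show "(c has_vector_derivative c' t) (at t)" "c' t \<noteq> 0" by simp_all
qed

lemma continuous_along_curve:
  assumes "open U" "continuous_on U f" "C1_regular_curve c c'" "c 0 \<in> U"
  shows "((\<lambda>t. f (c t)) \<longlongrightarrow> f (c 0)) (at_right 0)"
proof -
  have "isCont f (c 0)" using assms(1,2,4) continuous_on_eq_continuous_at by blast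
  then show ?thesis using isCont_tendsto_compose C1_regular_curve_tendsto(1)[OF assms(3)] by blast
qed

lemma frechet_derivative_along_level_curve:
  fixes f :: "'a::real_normed_vector \<Rightarrow> 'b::real_normed_vector"
  assumes "f differentiable (at (c t))" "(c has_vector_derivative v) (at t)"
    and "open S" "t \<in> S" "\<forall>s\<in>S. f (c s) = 0"
  shows "frechet_derivative f (at (c t)) v = 0"
proof -
  let ?D = "frechet_derivative f (at (c t))"
  have "((f \<circ> c) has_derivative ?D \<circ> (\<lambda>h. h *\<^sub>R v)) (at t)"
    using diff_chain_at assms(1,2) frechet_derivative_works
    unfolding has_vector_derivative_def by blast
  moreover have "((f \<circ> c) has_derivative (\<lambda>h. 0)) (at t)"
    by (rule has_derivative_transform_within_open[OF has_derivative_const assms(3,4)])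
       (use assms(5) in auto)
  ultimately have "?D \<circ> (\<lambda>h. h *\<^sub>R v) = (\<lambda>h. 0)"
    using has_derivative_unique by blast
  then show ?thesis by (metis comp_apply scaleR_one)
qed

lemma frechet_derivative_coordinates:
  fixes f :: "pt \<Rightarrow> 'b::real_normed_vector"
  assumes "f differentiable (at q)"
  shows "frechet_derivative f (at q) X = fst X *\<^sub>R pd_u f q + snd X *\<^sub>R pd_v f q"
proof -
  have lin: "linear (frechet_derivative f (at q))"
    using assms frechet_derivative_works has_derivative_linear by blast
  have "X = fst X *\<^sub>R (1, 0) + snd X *\<^sub>R (0, 1)" by (cases X) simp
  then have "frechet_derivative f (at q) X
      = frechet_derivative f (at q) (fst X *\<^sub>R (1, 0)) + frechet_derivative f (at q) (snd X *\<^sub>R (0, 1))"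
    using linear_add[OF lin] by metis
  also have "\<dots> = fst X *\<^sub>R frechet_derivative f (at q) (1, 0) + snd X *\<^sub>R frechet_derivative f (at q) (0, 1)"
    by (simp only: linear_scale[OF lin])
  finally show ?thesis
    unfolding pd_u_def pd_v_def .
qed

lemma continuous_nonvanishing_sign:
  fixes b :: "real \<Rightarrow> real"
  assumes "continuous_on S b" "connected S" "\<forall>t\<in>S. b t \<noteq> 0" "s \<in> S" "t \<in> S"
  shows "sgn (b t) = sgn (b s)"
proof (rule ccontr)
  assume "sgn (b t) \<noteq> sgn (b s)"
  then have "min (b s) (b t) < 0" "0 < max (b s) (b t)"
    using assms(3-5) by (auto simp: sgn_real_def split: if_splits)
  moreover have "connected (b ` S)" using connected_continuous_image assms(1,2) by blast
  ultimately have "0 \<in> b ` S"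
    using connectedD_interval[of "b ` S" "min (b s) (b t)" "max (b s) (b t)" 0] assms(4,5)
    by (auto simp: min_def max_def)
  then show False using assms(3) by auto
qed

lemma normalize_scaleR:
  fixes x :: "'a::real_normed_vector"
  assumes "a \<noteq> 0"
  shows "(1 / norm (a *\<^sub>R x)) *\<^sub>R (a *\<^sub>R x) = sgn a *\<^sub>R ((1 / norm x) *\<^sub>R x)"
proof -
  have "1 / (\<bar>a\<bar> * norm x) * a = sgn a * (1 / norm x)"
    using assms by (simp add: sgn_real_def)
  then show ?thesis by (simp add: scaleR_scaleR)
qed

lemma tendsto_normalized:
  fixes F :: "'a \<Rightarrow> 'b::real_normed_vector"
  assumes "(F \<longlongrightarrow> L) net" "L \<noteq> 0"
  shows "((\<lambda>x. (1 / norm (F x)) *\<^sub>R F x) \<longlongrightarrow> (1 / norm L) *\<^sub>R L) net"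
  using assms by (intro tendsto_intros) auto

lemma normalized_limit_of_rescaled:
  fixes b :: "real \<Rightarrow> real" and w F :: "real \<Rightarrow> 'a::real_normed_vector"
  assumes "\<delta> > 0" "continuous_on {0<..<\<delta>} b"
    and "\<forall>t\<in>{0<..<\<delta>}. b t \<noteq> 0 \<and> F t = b t *\<^sub>R w t"
    and "(w \<longlongrightarrow> w0) (at_right 0)" "w0 \<noteq> 0"
  shows "(\<forall>\<^sub>F t in at_right 0. F t \<noteq> 0) \<and>
         (\<exists>\<Psi>. ((\<lambda>t. (1 / norm (F t)) *\<^sub>R F t) \<longlongrightarrow> \<Psi>) (at_right 0))"
proof -
  define s where "s = sgn (b (\<delta> / 2))"
  have sign: "sgn (b t) = s" if "t \<in> {0<..<\<delta>}" for t
    unfolding s_def using assms(1-3) that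
    by (intro continuous_nonvanishing_sign[of "{0<..<\<delta>}"]) auto
  have "\<forall>\<^sub>F t in at_right 0. t \<in> {0<..<\<delta>}"
    unfolding eventually_at_right_field using assms(1) by (intro exI[of _ \<delta>]) auto
  with tendsto_imp_eventually_ne[OF assms(4,5)] have ev: "\<forall>\<^sub>F t in at_right 0.
      F t \<noteq> 0 \<and> (1 / norm (F t)) *\<^sub>R F t = s *\<^sub>R ((1 / norm (w t)) *\<^sub>R w t)"
  proof eventually_elim
    case (elim t)
    then have b: "b t \<noteq> 0" "F t = b t *\<^sub>R w t" "sgn (b t) = s"
      using assms(3) sign by auto
    show ?case
    proof
      show "F t \<noteq> 0" using b(1,2) elim by simp
      show "(1 / norm (F t)) *\<^sub>R F t = s *\<^sub>R ((1 / norm (w t)) *\<^sub>R w t)"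
        unfolding b(2) normalize_scaleR[OF b(1)] b(3) ..
    qed
  qed
  have lim: "((\<lambda>t. s *\<^sub>R ((1 / norm (w t)) *\<^sub>R w t)) \<longlongrightarrow> s *\<^sub>R ((1 / norm w0) *\<^sub>R w0)) (at_right 0)"
    using tendsto_normalized[OF assms(4,5)] by (rule tendsto_scaleR[OF tendsto_const])
  have "\<forall>\<^sub>F t in at_right 0. (1 / norm (F t)) *\<^sub>R F t = s *\<^sub>R ((1 / norm (w t)) *\<^sub>R w t)"
    using ev by (auto elim: eventually_mono)
  from tendsto_cong[OF this, THEN iffD2, OF lim]
  have "((\<lambda>t. (1 / norm (F t)) *\<^sub>R F t) \<longlongrightarrow> s *\<^sub>R ((1 / norm w0) *\<^sub>R w0)) (at_right 0)" .
  with ev show ?thesis by (auto elim: eventually_mono)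
qed

(* The only consequence of the coherence data used below: psi(d/du), psi(d/dv) are
   continuous and differentiable on the open chart. *)
lemma coherent_tb_regular:
  assumes "coherent_tb U psu psv wu wv"
  shows "open U" and "continuous_on U psu" and "continuous_on U psv"
    and "psu differentiable_on U" and "psv differentiable_on U"
proof -
  have "smooth_on U psu" "smooth_on U psv" "open U"
    using assms unfolding coherent_tb_def by auto
  then show "open U" "continuous_on U psu" "continuous_on U psv"
      "psu differentiable_on U" "psv differentiable_on U"
    unfolding smooth_on_def by (metis iter_pd.simps(1))+
qed

(* In g-coordinates d/du and d/dv are eigenvectors of I for distinct eigenvalues, hence
   g-orthogonal; so G12 = 0, psi(d/du) \<bottom> psi(d/dv), and lambda_2 > 0 forces psi(d/dv) \<noteq> 0. *)
lemma g_coordinates_frame: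
  assumes "g_coordinates U psu psv" "q \<in> U"
  shows "psu q \<bullet> psv q = 0" and "psv q \<noteq> 0"
proof -
  obtain G11 G12 G22 :: "pt \<Rightarrow> real" where "G11 q > 0" "G11 q * G22 q - (G12 q)\<^sup>2 > 0"
    "\<exists>l1 l2. 0 \<le> l1 \<and> l1 < l2 \<and> psu q \<bullet> psu q = l1 * G11 q \<and> psv q \<bullet> psu q = l1 * G12 q \<and>
             psu q \<bullet> psv q = l2 * G12 q \<and> psv q \<bullet> psv q = l2 * G22 q"
    using assms unfolding g_coordinates_def by blast
  then obtain G11 G12 G22 l1 l2 :: real where
    G: "G11 > 0" "G11 * G22 - G12\<^sup>2 > 0" and l: "0 \<le> l1" "l1 < l2"
    and e: "psv q \<bullet> psu q = l1 * G12" "psu q \<bullet> psv q = l2 * G12" "psv q \<bullet> psv q = l2 * G22"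
    by blast
  have "(l2 - l1) * G12 = 0" using e by (simp add: inner_commute algebra_simps)
  then have "G12 = 0" using l by simp
  then show "psu q \<bullet> psv q = 0" using e by simp
  have "G22 > 0" using G \<open>G12 = 0\<close> by (simp add: zero_less_mult_iff)
  then have "psv q \<bullet> psv q > 0" using e l by simp
  then show "psv q \<noteq> 0" by auto
qed

lemma det2_orthogonal_eq_zero:
  fixes x y :: pt
  assumes "x \<bullet> y = 0" "y \<noteq> 0" "det2 x y = 0"
  shows "x = 0"
proof -
  obtain a b c d where xy: "x = (a, b)" "y = (c, d)" by (cases x, cases y) auto
  have h: "a * c + b * d = 0" "a * d - b * c = 0"
    using assms xy by (auto simp: det2_def inner_Pair)
  have n: "c\<^sup>2 + d\<^sup>2 \<noteq> 0"
    using assms(2) xy by (simp add: sum_power2_eq_zero_iff zero_prod_def)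
  have "a * (c\<^sup>2 + d\<^sup>2) = c * (a * c + b * d) + d * (a * d - b * c)"
       "b * (c\<^sup>2 + d\<^sup>2) = d * (a * c + b * d) - c * (a * d - b * c)"
    by algebra+
  then have "a = 0" "b = 0" using h n by auto
  then show ?thesis using xy by (simp add: zero_prod_def)
qed

lemma psi_at_singular:
  assumes "g_coordinates U psu psv" "q \<in> singular_set U psu psv"
  shows "psi_at psu psv q X = snd X *\<^sub>R psv q"
proof -
  have "q \<in> U" "det2 (psu q) (psv q) = 0"
    using assms(2) unfolding singular_set_def lam_def by auto
  then have "psu q = 0"
    using det2_orthogonal_eq_zero g_coordinates_frame[OF assms(1)] by blast
  then show ?thesis unfolding psi_at_def by simp
qed

lemma lam_differentiable:
  assumes "psu differentiable (at q)" "psv differentiable (at q)"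
  shows "lam psu psv differentiable (at q)"
proof -
  obtain D1 D2 where "(psu has_derivative D1) (at q)" "(psv has_derivative D2) (at q)"
    using assms unfolding differentiable_def by blast
  then have "((\<lambda>x. fst (psu x) * snd (psv x) - snd (psu x) * fst (psv x)) has_derivative
      (\<lambda>h. fst (psu q) * snd (D2 h) + fst (D1 h) * snd (psv q)
          - (snd (psu q) * fst (D2 h) + snd (D1 h) * fst (psv q)))) (at q)"
    by (auto intro!: derivative_eq_intros)
  then show ?thesis unfolding lam_def det2_def differentiable_def by (auto simp: fun_eq_iff)
qed

(* At an A_2-point lying on a singular curve the velocity of the curve is not a null vector:
   it is tangent to {lambda = 0}, whereas a null vector would be transversal to it. *)
lemma A2_singular_curve_not_null:
  assumes "open U" "psu differentiable_on U" "psv differentiable_on U"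
    and "(c has_vector_derivative v) (at t)" "v \<noteq> 0"
    and "open S" "t \<in> S" "c ` S \<subseteq> singular_set U psu psv"
    and "A2_point U psu psv (c t)"
  shows "psi_at psu psv (c t) v \<noteq> 0"
proof
  assume null: "psi_at psu psv (c t) v = 0"
  have "c t \<in> U" and lam0: "\<forall>s\<in>S. lam psu psv (c s) = 0"
    using assms(7,8) unfolding singular_set_def by auto
  then have diff: "lam psu psv differentiable (at (c t))"
    using lam_differentiable assms(1-3) differentiable_on_eq_differentiable_at by blast
  have "dlam psu psv (c t) v = frechet_derivative (lam psu psv) (at (c t)) v"
    using frechet_derivative_coordinates[OF diff] unfolding dlam_def by simp
  also have "\<dots> = 0"
    using frechet_derivative_along_level_curve[OF diff assms(4,6,7) lam0] .
  finally show False using assms(5,9) null unfolding A2_point_def by auto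
qed

lemma singular_curve_psi_coefficient:
  assumes "coherent_tb U psu psv wu wv" "peak U psu psv p" "g_coordinates U psu psv"
    and "C1_regular_curve \<gamma> \<gamma>'" "\<gamma> 0 = p" "\<gamma> ` {0..<1} \<subseteq> singular_set U psu psv"
  shows "\<exists>\<delta>>0. \<delta> \<le> 1 \<and> (\<forall>t\<in>{0<..<\<delta>}. snd (\<gamma>' t) \<noteq> 0 \<and>
           psi_at psu psv (\<gamma> t) (\<gamma>' t) = snd (\<gamma>' t) *\<^sub>R psv (\<gamma> t))"
proof -
  note reg = coherent_tb_regular[OF assms(1)]
  obtain V where V: "open V" "p \<in> V"
    "\<forall>q \<in> singular_set U psu psv \<inter> V - {p}. A2_point U psu psv q"
    using assms(2) unfolding peak_def by (elim conjE exE) (rule that; assumption)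
  have "\<forall>\<^sub>F t in at_right 0. \<gamma> t \<in> V"
    using topological_tendstoD[OF C1_regular_curve_tendsto(1)[OF assms(4)]] V(1,2) assms(5)
    by simp
  with C1_regular_curve_leaves_start[OF assms(4)]
  have "\<forall>\<^sub>F t in at_right 0. \<gamma> t \<in> V - {p}"
    by eventually_elim (use assms(5) in simp)
  then obtain \<delta>0 where "\<delta>0 > 0" "\<And>t. 0 < t \<Longrightarrow> t < \<delta>0 \<Longrightarrow> \<gamma> t \<in> V - {p}"
    unfolding eventually_at_right_field by auto
  then obtain \<delta> where \<delta>: "\<delta> > 0" "\<delta> \<le> 1" "\<And>t. 0 < t \<Longrightarrow> t < \<delta> \<Longrightarrow> \<gamma> t \<in> V - {p}"
    by (intro that[of "min \<delta>0 1"]) auto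
  have "snd (\<gamma>' t) \<noteq> 0 \<and> psi_at psu psv (\<gamma> t) (\<gamma>' t) = snd (\<gamma>' t) *\<^sub>R psv (\<gamma> t)"
    if t: "t \<in> {0<..<\<delta>}" for t
  proof -
    have t1: "t \<in> {0<..<1}" using t \<delta>(2) by auto
    then have sing: "\<gamma> t \<in> singular_set U psu psv" using assms(6) by auto
    have psi: "psi_at psu psv (\<gamma> t) (\<gamma>' t) = snd (\<gamma>' t) *\<^sub>R psv (\<gamma> t)"
      using psi_at_singular[OF assms(3) sing] .
    have "A2_point U psu psv (\<gamma> t)" using V(3) sing \<delta>(3) t by auto
    then have "psi_at psu psv (\<gamma> t) (\<gamma>' t) \<noteq> 0"
        using A2_singular_curve_not_null[OF reg(1,4,5) C1_regular_curve_interior_derivative[OF assms(4) t1]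
              open_greaterThanLessThan t1] assms(6) by force
    then show ?thesis using psi by auto
  qed
  then show ?thesis using \<delta>(1,2) by blast
qed

theorem mainTheorem2:
  fixes U :: "pt set" and psu psv :: "pt \<Rightarrow> pt" and wu wv :: "pt \<Rightarrow> real"
    and p :: pt and \<gamma> \<gamma>' :: "real \<Rightarrow> pt"
  assumes "coherent_tb U psu psv wu wv"
    and "p \<in> U"
    and "peak U psu psv p"
    and "g_coordinates U psu psv"
    and "C1_regular_curve \<gamma> \<gamma>'"
    and "\<gamma> 0 = p"
    and "\<gamma> ` {0..<1} \<subseteq> U"
    and "psi_at psu psv p (\<gamma>' 0) \<noteq> 0 \<or> \<gamma> ` {0..<1} \<subseteq> singular_set U psu psv"
  shows "(\<forall>\<^sub>F t in at_right 0. psi_at psu psv (\<gamma> t) (\<gamma>' t) \<noteq> 0) \<and>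
         (\<exists>\<Psi>. ((\<lambda>t. (1 / norm (psi_at psu psv (\<gamma> t) (\<gamma>' t))) *\<^sub>R psi_at psu psv (\<gamma> t) (\<gamma>' t))
                 \<longlongrightarrow> \<Psi>) (at_right 0))"
proof -
  note reg = coherent_tb_regular[OF assms(1)]
  have psv_lim: "((\<lambda>t. psv (\<gamma> t)) \<longlongrightarrow> psv p) (at_right 0)"
    using continuous_along_curve[OF reg(1,3) assms(5)] assms(2,6) by simp
  from assms(8) show ?thesis
  proof
    assume nonnull: "psi_at psu psv p (\<gamma>' 0) \<noteq> 0"
    have "((\<lambda>t. psi_at psu psv (\<gamma> t) (\<gamma>' t)) \<longlongrightarrow> psi_at psu psv p (\<gamma>' 0)) (at_right 0)"
      unfolding psi_at_def using continuous_along_curve[OF reg(1,2) assms(5)] assms(2,6)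
      by (intro tendsto_intros psv_lim C1_regular_curve_tendsto(2)[OF assms(5)]) simp_all
    then show ?thesis using tendsto_imp_eventually_ne tendsto_normalized nonnull by blast
  next
    assume singular: "\<gamma> ` {0..<1} \<subseteq> singular_set U psu psv"
    obtain \<delta> where \<delta>: "\<delta> > 0" "\<delta> \<le> 1" and coeff: "\<forall>t\<in>{0<..<\<delta>}. snd (\<gamma>' t) \<noteq> 0 \<and>
        psi_at psu psv (\<gamma> t) (\<gamma>' t) = snd (\<gamma>' t) *\<^sub>R psv (\<gamma> t)"
      using singular_curve_psi_coefficient[OF assms(1,3,4,5,6) singular] by blast
    have "continuous_on {0..<1} \<gamma>'" using assms(5) unfolding C1_regular_curve_def by blast
    then have "continuous_on {0<..<\<delta>} (\<lambda>t. snd (\<gamma>' t))"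
      by (rule continuous_on_subset[OF continuous_on_snd]) (use \<delta>(2) in auto)
    then show ?thesis
      using normalized_limit_of_rescaled[OF \<delta>(1) _ coeff psv_lim]
            g_coordinates_frame(2)[OF assms(4,2)] by blast
  qed
qed

end
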